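(* Let \[ \theta = \begin{pmatrix} 0 & \theta_{1,2} & \theta_{1,3} \\ -\theta_{1,2} & 0 & \theta_{2,3} \\ -\theta_{1,3} & -\theta_{2,3} & 0 \end{pmatrix} \] be a skew symmetric real $3 \times 3$ matrix. Then $\theta$ is nondegenerate if and only if $\dim_{\mathbb{Q}} \operatorname{span}_{\mathbb{Q}}(1, \theta_{1,2}, \theta_{1,3}, \theta_{2,3}) \geq 3$.
   Context: A skew symmetric real $d \times d$ matrix $\theta$ is nondegenerate if there is no $x \in \mathbb{Q}^d \setminus \{0\}$ such that $\langle x, \theta y \rangle \in \mathbb{Q}$ for all $y \in \mathbb{Q}^d$. *)

theory Defs
  imports "HOL-Analysis.Analysis"
begin

text \<open>Real numbers viewed as a vector space over the rationals.\<close>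
definition rscale :: "rat \<Rightarrow> real \<Rightarrow> real" where
  "rscale q x = real_of_rat q * x"

definition dim_Q :: "real set \<Rightarrow> nat" where
  "dim_Q S = vector_space.dim rscale S"

definition rat_vec :: "real^'n \<Rightarrow> bool" where
  "rat_vec x \<longleftrightarrow> (\<forall>i. x $ i \<in> \<rat>)"

definition nondegenerate :: "real^'n^'n \<Rightarrow> bool" where
  "nondegenerate \<theta> \<longleftrightarrow>
     \<not> (\<exists>x. rat_vec x \<and> x \<noteq> 0 \<and> (\<forall>y. rat_vec y \<longrightarrow> x \<bullet> (\<theta> *v y) \<in> \<rat>))"

lemma "vector_space rscale"
  unfolding rscale_def by unfold_locales (auto simp: algebra_simps of_rat_add of_rat_mult)

end

theory Submission
  imports Defs
begin

text \<open>For skew-symmetric \<open>\<theta>\<close> one has \<open>\<theta> y = \<omega> \<times> y\<close> with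
  \<open>\<omega> = (-\<theta>\<^sub>2\<^sub>3, \<theta>\<^sub>1\<^sub>3, -\<theta>\<^sub>1\<^sub>2)\<close>, so \<open>x \<bullet> \<theta> y = (x \<times> \<omega>) \<bullet> y\<close> and \<open>\<theta>\<close> is degenerate
  iff \<open>x \<times> \<omega>\<close> is rational for some nonzero rational \<open>x\<close>. This happens iff
  \<open>\<omega> = p + t q\<close> with \<open>p, q\<close> rational: given \<open>x\<close>, the identity
  \<open>x \<times> (x \<times> \<omega>) = (x \<bullet> \<omega>) x - (x \<bullet> x) \<omega>\<close> solves for \<open>\<omega>\<close>; conversely \<open>x = q\<close>
  works (any rational \<open>x\<close> if \<open>q = 0\<close>). Componentwise, \<open>\<omega> = p + t q\<close> says that
  the entries \<open>\<theta>\<^sub>1\<^sub>2, \<theta>\<^sub>1\<^sub>3, \<theta>\<^sub>2\<^sub>3\<close> lie in \<open>\<rat> + \<rat> t\<close>, i.e. that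
  \<open>1, \<theta>\<^sub>1\<^sub>2, \<theta>\<^sub>1\<^sub>3, \<theta>\<^sub>2\<^sub>3\<close> span a \<open>\<rat>\<close>-space of dimension at most 2.\<close>

lemma (in vector_space) dim_insert_le_2_iff:
  assumes "v \<noteq> 0" "finite S"
  shows "dim (insert v S) \<le> 2 \<longleftrightarrow> (\<exists>t. S \<subseteq> span {v, t})"
proof
  assume dim: "dim (insert v S) \<le> 2"
  have "independent {v}"
    using assms(1) by (simp add: independent_insert)
  then obtain B where B: "{v} \<subseteq> B" "B \<subseteq> insert v S" "independent B" "insert v S \<subseteq> span B"
    using maximal_independent_subset_extend[of "{v}" "insert v S"] by blast
  have "finite B"
    using B(2) assms(2) finite_subset by blast
  moreover have "card (B - {v}) \<le> Suc 0"
    using basis_card_eq_dim[OF B(2,4,3)] dim B(1) by (simp add: card_Diff_singleton)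
  ultimately have "\<forall>a1 \<in> B - {v}. \<forall>a2 \<in> B - {v}. a1 = a2"
    by (simp add: card_le_Suc0_iff_eq)
  then obtain t where "B \<subseteq> {v, t}"
    by blast
  then show "\<exists>t. S \<subseteq> span {v, t}"
    using B(4) span_mono by blast
next
  assume "\<exists>t. S \<subseteq> span {v, t}"
  then obtain t where "insert v S \<subseteq> span {v, t}"
    using span_base by blast
  then have "dim (insert v S) \<le> card {v, t}"
    by (rule dim_le_card) simp
  also have "\<dots> \<le> 2"
    by (simp add: card_insert_if)
  finally show "dim (insert v S) \<le> 2" .
qed

interpretation Q: vector_space rscale
  unfolding rscale_def by unfold_locales (auto simp: algebra_simps of_rat_add of_rat_mult)

lemma Q_span_one_pair: "Q.span {1, t} = {p + q * t | p q. p \<in> \<rat> \<and> q \<in> \<rat>}"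
proof -
  have "Q.span {1, t} = {x. \<exists>k j. x - rscale k t = rscale j 1}"
    by (subst insert_commute, subst Q.span_insert) (auto simp: Q.span_singleton)
  also have "\<dots> = {p + q * t | p q. p \<in> \<rat> \<and> q \<in> \<rat>}"
  proof safe
    fix x k j
    assume "x - rscale k t = rscale j 1"
    then have "x = of_rat j + of_rat k * t"
      by (simp add: rscale_def algebra_simps)
    then show "\<exists>p q. x = p + q * t \<and> p \<in> \<rat> \<and> q \<in> \<rat>"
      using Rats_of_rat by blast
  next
    fix p q :: real
    assume "p \<in> \<rat>" "q \<in> \<rat>"
    then obtain j k where "p = of_rat j" "q = of_rat k"
      by (auto elim!: Rats_cases)
    then have "p + q * t - rscale k t = rscale j 1"
      by (simp add: rscale_def)
    then show "\<exists>k j. p + q * t - rscale k t = rscale j 1"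
      by blast
  qed
  finally show ?thesis .
qed

lemma Q_span_neg_iff: "- x \<in> Q.span S \<longleftrightarrow> x \<in> Q.span S"
  by (metis Q.span_neg minus_minus)

unbundle cross3_syntax

lemma rat_vec_scaleR: "c \<in> \<rat> \<Longrightarrow> rat_vec x \<Longrightarrow> rat_vec (c *\<^sub>R x)"
  by (simp add: rat_vec_def)

lemma rat_vec_axis: "rat_vec (axis i 1)"
  by (simp add: rat_vec_def axis_def)

lemma rat_vec_cross: "rat_vec x \<Longrightarrow> rat_vec y \<Longrightarrow> rat_vec (x \<times> y)"
  by (simp add: rat_vec_def cross3_def forall_3)

lemma inner_rat_vec: "rat_vec x \<Longrightarrow> rat_vec y \<Longrightarrow> x \<bullet> y \<in> \<rat>"
  by (auto simp: rat_vec_def inner_vec_def)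

lemma rat_vec_iff_inner_Rats: "rat_vec v \<longleftrightarrow> (\<forall>y. rat_vec y \<longrightarrow> v \<bullet> y \<in> \<rat>)"
proof
  assume "\<forall>y. rat_vec y \<longrightarrow> v \<bullet> y \<in> \<rat>"
  then have "v \<bullet> axis i 1 \<in> \<rat>" for i
    using rat_vec_axis by blast
  then show "rat_vec v"
    by (simp add: rat_vec_def inner_axis)
qed (use inner_rat_vec in blast)

lemma inner_cross_cyclic: "x \<bullet> (y \<times> z) = z \<bullet> (x \<times> y)"
  by (simp add: cross3_simps)

lemma cross_cross_self: "x \<times> (x \<times> w) = (x \<bullet> w) *\<^sub>R x - (x \<bullet> x) *\<^sub>R w"
  by (simp add: cross3_simps forall_3)

lemma skew_matrix_entry: "transpose \<theta> = - \<theta> \<Longrightarrow> \<theta>$j$i = - \<theta>$i$j"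
  by (drule arg_cong[where f = "\<lambda>M. M$i$j"]) (simp add: transpose_def)

definition axial_vector :: "real^3^3 \<Rightarrow> real^3" where
  "axial_vector \<theta> = vector [- \<theta>$2$3, \<theta>$1$3, - \<theta>$1$2]"

lemma skew_matrix_vector_mult_eq_cross:
  assumes "transpose \<theta> = - \<theta>"
  shows "\<theta> *v y = axial_vector \<theta> \<times> y"
proof -
  have "\<theta>$i$i = 0" for i
    using skew_matrix_entry[OF assms, of i i] by simp
  with skew_matrix_entry[OF assms, of 1 2] skew_matrix_entry[OF assms, of 1 3]
    skew_matrix_entry[OF assms, of 2 3]
  show ?thesis
    by (simp add: axial_vector_def cross3_def matrix_vector_mult_def vec_eq_iff forall_3 sum_3)
qed

lemma nondegenerate_skew3_iff:
  assumes "transpose \<theta> = - \<theta>"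
  shows "nondegenerate \<theta> \<longleftrightarrow> \<not> (\<exists>x. rat_vec x \<and> x \<noteq> 0 \<and> rat_vec (x \<times> axial_vector \<theta>))"
proof -
  let ?\<omega> = "axial_vector \<theta>"
  have "x \<bullet> (\<theta> *v y) = (x \<times> ?\<omega>) \<bullet> y" for x y
    using inner_cross_cyclic[of x ?\<omega> y]
    by (simp add: skew_matrix_vector_mult_eq_cross[OF assms] inner_commute)
  then have "(\<forall>y. rat_vec y \<longrightarrow> x \<bullet> (\<theta> *v y) \<in> \<rat>) \<longleftrightarrow> rat_vec (x \<times> ?\<omega>)" for x
    by (simp add: rat_vec_iff_inner_Rats[of "x \<times> ?\<omega>"])
  then show ?thesis
    unfolding nondegenerate_def by (simp only:)
qed

definition on_rational_line :: "real^'n \<Rightarrow> bool" where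
  "on_rational_line w \<longleftrightarrow> (\<exists>p q t. rat_vec p \<and> rat_vec q \<and> w = p + t *\<^sub>R q)"

lemma on_rational_line_iff_components:
  "on_rational_line w \<longleftrightarrow> (\<exists>t. \<forall>i. w$i \<in> Q.span {1, t})"
proof
  assume "on_rational_line w"
  then obtain p q t where "rat_vec p" "rat_vec q" "w = p + t *\<^sub>R q"
    unfolding on_rational_line_def by blast
  then have "w$i = p$i + q$i * t \<and> p$i \<in> \<rat> \<and> q$i \<in> \<rat>" for i
    by (simp add: rat_vec_def mult.commute)
  then have "\<forall>i. w$i \<in> Q.span {1, t}"
    unfolding Q_span_one_pair by blast
  then show "\<exists>t. \<forall>i. w$i \<in> Q.span {1, t}" ..
next
  assume "\<exists>t. \<forall>i. w$i \<in> Q.span {1, t}"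
  then obtain t p q where "\<forall>i. w$i = p i + q i * t \<and> p i \<in> \<rat> \<and> q i \<in> \<rat>"
    unfolding Q_span_one_pair by simp metis
  then have "rat_vec (\<chi> i. p i)" "rat_vec (\<chi> i. q i)" "w = (\<chi> i. p i) + t *\<^sub>R (\<chi> i. q i)"
    by (auto simp: rat_vec_def vec_eq_iff mult.commute)
  then show "on_rational_line w"
    unfolding on_rational_line_def by blast
qed

lemma rational_cross_iff_on_rational_line:
  fixes w :: "real^3"
  shows "(\<exists>x. rat_vec x \<and> x \<noteq> 0 \<and> rat_vec (x \<times> w)) \<longleftrightarrow> on_rational_line w"
proof
  assume "\<exists>x. rat_vec x \<and> x \<noteq> 0 \<and> rat_vec (x \<times> w)"
  then obtain x where x: "rat_vec x" "x \<noteq> 0" "rat_vec (x \<times> w)"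
    by blast
  define c where "c = 1 / (x \<bullet> x)"
  have "c \<in> \<rat>"
    unfolding c_def using inner_rat_vec[OF x(1) x(1)] by simp
  have "w = c *\<^sub>R ((x \<bullet> x) *\<^sub>R w)"
    using x(2) by (simp add: c_def)
  also have "\<dots> = c *\<^sub>R ((x \<bullet> w) *\<^sub>R x - x \<times> (x \<times> w))"
    by (simp add: cross_cross_self)
  also have "\<dots> = (- c) *\<^sub>R (x \<times> (x \<times> w)) + (x \<bullet> w) *\<^sub>R (c *\<^sub>R x)"
    by (simp add: algebra_simps)
  finally have "w = (- c) *\<^sub>R (x \<times> (x \<times> w)) + (x \<bullet> w) *\<^sub>R (c *\<^sub>R x)" .
  moreover have "rat_vec ((- c) *\<^sub>R (x \<times> (x \<times> w)))"
    by (rule rat_vec_scaleR) (simp_all add: \<open>c \<in> \<rat>\<close> rat_vec_cross[OF x(1) x(3)])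
  moreover have "rat_vec (c *\<^sub>R x)"
    using \<open>c \<in> \<rat>\<close> x by (intro rat_vec_scaleR)
  ultimately show "on_rational_line w"
    unfolding on_rational_line_def by blast
next
  assume "on_rational_line w"
  then obtain p q t where pq: "rat_vec p" "rat_vec q" and w: "w = p + t *\<^sub>R q"
    unfolding on_rational_line_def by blast
  show "\<exists>x. rat_vec x \<and> x \<noteq> 0 \<and> rat_vec (x \<times> w)"
  proof (cases "q = 0")
    case True
    have "rat_vec (axis 1 1 \<times> w)"
      using True w pq by (simp add: rat_vec_cross rat_vec_axis)
    then show ?thesis
      using rat_vec_axis by (metis axis_eq_0_iff zero_neq_one)
  next
    case False
    have "q \<times> w = q \<times> p"
      by (simp add: w cross_add_right cross_mult_right)
    then show ?thesis
      using False pq by (metis rat_vec_cross)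
  qed
qed

theorem lemma4p1:
  fixes \<theta> :: "real^3^3"
  assumes "transpose \<theta> = - \<theta>"
  shows "nondegenerate \<theta> \<longleftrightarrow> dim_Q {1, \<theta>$1$2, \<theta>$1$3, \<theta>$2$3} \<ge> 3"
proof -
  have "(\<forall>i. axial_vector \<theta> $ i \<in> Q.span {1, t}) \<longleftrightarrow> {\<theta>$1$2, \<theta>$1$3, \<theta>$2$3} \<subseteq> Q.span {1, t}" for t
    by (auto simp: axial_vector_def forall_3 Q_span_neg_iff)
  then have "nondegenerate \<theta> \<longleftrightarrow> \<not> (\<exists>t. {\<theta>$1$2, \<theta>$1$3, \<theta>$2$3} \<subseteq> Q.span {1, t})"
    by (simp add: nondegenerate_skew3_iff[OF assms] rational_cross_iff_on_rational_line
        on_rational_line_iff_components)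
  also have "\<dots> \<longleftrightarrow> \<not> dim_Q {1, \<theta>$1$2, \<theta>$1$3, \<theta>$2$3} \<le> 2"
    by (simp add: dim_Q_def Q.dim_insert_le_2_iff)
  finally show ?thesis
    by linarith
qed

end
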